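(* Let $\lambda>0$ and let $L_0,S_0\in\mathbb{R}^{n\times n}$. Suppose the program \[ \text{minimize } \|L\|_*+\lambda\|S\|_1\quad\text{subject to}\quad L+S=M_0 \] with $M_0=L_0+S_0$ has the unique solution $(L_0,S_0)$. Let $S_0'$ be a trimmed version of $S_0$ and $M_0'=L_0+S_0'$. Then the same program with input $M_0'$ in place of $M_0$ is exact, i.e. its solution is $(L_0,S_0')$.
   Context: $\|L\|_*$ is the nuclear norm (sum of singular values) and $\|S\|_1=\sum_{ij}|S_{ij}|$. A matrix $S'$ is a trimmed version of $S$ if $\mathrm{supp}(S')\subset\mathrm{supp}(S)$ and $S'_{ij}=S_{ij}$ whenever $S'_{ij}\neq0$ (i.e. $S'$ is obtained by setting some entries of $S$ to zero). *)

theory Defs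
  imports "HOL-Analysis.Analysis"
begin

definition diag_mat :: "('n::finite \<Rightarrow> real) \<Rightarrow> real^'n^'n" where
  "diag_mat \<sigma> = (\<chi> i j. if i = j then \<sigma> i else 0)"

definition nuclear_norm :: "real^'n::finite^'n \<Rightarrow> real" where
  "nuclear_norm A = (THE s. \<exists>U V \<sigma>. orthogonal_matrix U \<and> orthogonal_matrix V \<and>
      (\<forall>i. \<sigma> i \<ge> 0) \<and> A = U ** diag_mat \<sigma> ** transpose V \<and> s = (\<Sum>i\<in>UNIV. \<sigma> i))"

definition l1_norm :: "real^'n::finite^'n \<Rightarrow> real" where
  "l1_norm S = (\<Sum>i\<in>UNIV. \<Sum>j\<in>UNIV. \<bar>S $ i $ j\<bar>)"

definition pcp_obj :: "real \<Rightarrow> real^'n::finite^'n \<Rightarrow> real^'n^'n \<Rightarrow> real" where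
  "pcp_obj lam L S = nuclear_norm L + lam * l1_norm S"

definition unique_solution :: "real \<Rightarrow> real^'n::finite^'n \<Rightarrow> real^'n^'n \<Rightarrow> real^'n^'n \<Rightarrow> bool" where
  "unique_solution lam M L S \<longleftrightarrow> L + S = M \<and>
     (\<forall>L' S'. L' + S' = M \<and> (L', S') \<noteq> (L, S) \<longrightarrow> pcp_obj lam L S < pcp_obj lam L' S')"

definition trimmed :: "real^'n::finite^'n \<Rightarrow> real^'n^'n \<Rightarrow> bool" where
  "trimmed S' S \<longleftrightarrow> (\<forall>i j. S' $ i $ j \<noteq> 0 \<longrightarrow> S' $ i $ j = S $ i $ j)"

end

theory Submission
  imports Defs
begin

text \<open>Let \<open>D = S0 - S0'\<close> be the removed entries. Since trimming only zeroes entries,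
  \<open>\<parallel>S0\<parallel>\<^sub>1 = \<parallel>S0'\<parallel>\<^sub>1 + \<parallel>D\<parallel>\<^sub>1\<close>, so the objective at \<open>(L0, S0)\<close> exceeds that at \<open>(L0, S0')\<close>
  by exactly \<open>\<lambda>\<parallel>D\<parallel>\<^sub>1\<close>. A competitor \<open>(L, S)\<close> for \<open>M0'\<close> lifts to the competitor \<open>(L, S + D)\<close>
  for \<open>M0\<close>, whose objective exceeds that of \<open>(L, S)\<close> by at most \<open>\<lambda>\<parallel>D\<parallel>\<^sub>1\<close>. Strict optimality
  of \<open>(L0, S0)\<close> therefore transfers to \<open>(L0, S0')\<close>.\<close>

lemma l1_norm_triangle: "l1_norm (A + B) \<le> l1_norm A + l1_norm (B :: real^'n::finite^'n)"
  unfolding l1_norm_def by (simp add: sum.distrib[symmetric] sum_mono abs_triangle_ineq)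

lemma l1_norm_trimmed_split:
  assumes "trimmed S' S"
  shows "l1_norm S = l1_norm S' + l1_norm (S - S' :: real^'n::finite^'n)"
proof -
  have "\<bar>S $ i $ j\<bar> = \<bar>S' $ i $ j\<bar> + \<bar>S $ i $ j - S' $ i $ j\<bar>" for i j
    using assms unfolding trimmed_def by (cases "S' $ i $ j = 0") auto
  then show ?thesis unfolding l1_norm_def by (simp add: sum.distrib[symmetric])
qed

lemma pcp_obj_add_sparse_le:
  assumes "lam \<ge> 0"
  shows "pcp_obj lam L (S + D) \<le> pcp_obj lam L S + lam * l1_norm (D :: real^'n::finite^'n)"
  using mult_left_mono[OF l1_norm_triangle[of S D] assms]
  unfolding pcp_obj_def by (simp add: distrib_left)

lemma pcp_obj_trimmed:
  assumes "trimmed S' S"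
  shows "pcp_obj lam L S = pcp_obj lam L S' + lam * l1_norm (S - S' :: real^'n::finite^'n)"
  unfolding pcp_obj_def l1_norm_trimmed_split[OF assms] by (simp add: distrib_left)

theorem theorem2p1:
  fixes lam :: real and L0 S0 S0' :: "real^'n::finite^'n"
  assumes "lam > 0"
    and "unique_solution lam (L0 + S0) L0 S0"
    and "trimmed S0' S0"
  shows "unique_solution lam (L0 + S0') L0 S0'"
  unfolding unique_solution_def
proof (intro conjI allI impI)
  fix L S :: "real^'n^'n"
  assume competitor: "L + S = L0 + S0' \<and> (L, S) \<noteq> (L0, S0')"
  define D where "D = S0 - S0'"
  have "L + (S + D) = L0 + S0" and "(L, S + D) \<noteq> (L0, S0)"
    using competitor unfolding D_def by (auto simp: algebra_simps)
  then have "pcp_obj lam L0 S0 < pcp_obj lam L (S + D)"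
    using assms(2) unfolding unique_solution_def by blast
  moreover have "pcp_obj lam L (S + D) \<le> pcp_obj lam L S + lam * l1_norm D"
    using assms(1) by (simp add: pcp_obj_add_sparse_le)
  moreover have "pcp_obj lam L0 S0 = pcp_obj lam L0 S0' + lam * l1_norm D"
    unfolding D_def by (rule pcp_obj_trimmed[OF assms(3)])
  ultimately show "pcp_obj lam L0 S0' < pcp_obj lam L S" by linarith
qed simp

end
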